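(* Let $D_{\mathrm{jnt}}$ be any distribution of $(\mathsf X,\bar{\mathsf Y},\mathsf Y)$ on $\mathcal X\times\{0,1\}\times\{0,1\}$, let $c,\bar c\in[0,1]$ and $\bar D\in\{\bar D_{\mathrm{DP}},\bar D_{\mathrm{EO}}\}$. Let $F$ be the fairness frontier: for $\tau\ge0$, $F(\tau)=V(\tau)-V(0)$ where $V(\tau)=\inf\{\mathrm{CS}(f;D,c): f\colon\mathcal X\to[0,1],\ \mathrm{CS}^\diamond(f;\bar D,\bar c)\ge\tau\}$. Define $$B_{c,\bar c}(u,v)=|u-\bar c|\cdot\mathbf 1[(u-\bar c)(v-c)<0],\qquad \Delta_{c,\bar c}(\bar\eta,\eta)=\mathbb E_{\mathsf X}\big[B_{c,\bar c}(\bar\eta(\mathsf X),\eta(\mathsf X))\big]-\mathbb I_\varphi(\bar P_1,\bar P_0),$$ with $\varphi(t)=-\min\big((1-\bar c)\bar\pi t,\ \bar c(1-\bar\pi)\big)$, and analogously $\Delta_{-c,\bar c}(\bar\eta,-\eta)=\mathbb E_{\mathsf X}\big[|\bar\eta(\mathsf X)-\bar c|\,\mathbf 1[(\bar\eta(\mathsf X)-\bar c)(-\eta(\mathsf X)+c)<0]\big]-\mathbb I_\varphi(\bar P_1,\bar P_0)$. Let $\tau^*=\min\big(\Delta_{c,\bar c}(\bar\eta,\eta),\Delta_{-c,\bar c}(\bar\eta,-\eta)\big)$. Then $F(\tau)=0$ for every $\tau\in[0,\tau^*]$.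
   Context: $D$ is the law of $(\mathsf X,\mathsf Y)$, $\bar D_{\mathrm{DP}}$ the law of $(\mathsf X,\bar{\mathsf Y})$, $\bar D_{\mathrm{EO}}$ the law of $(\mathsf X,\bar{\mathsf Y})$ conditional on $\mathsf Y=1$. $\eta(x)=\Pr(\mathsf Y=1\mid\mathsf X=x)$. With respect to $\bar D$: $\bar\eta(x)=\Pr_{\bar D}(\bar{\mathsf Y}=1\mid\mathsf X=x)$, $\bar\pi=\Pr_{\bar D}(\bar{\mathsf Y}=1)$, $\bar P_y$ is the law of $\mathsf X$ given $\bar{\mathsf Y}=y$ under $\bar D$, and $\mathbb E_{\mathsf X}$ is expectation over the $\mathsf X$-marginal of $\bar D$. For a convex $\varphi$, the $f$-divergence is $\mathbb I_\varphi(P,Q)=\int q\,\varphi(p/q)\,d\mu$ for densities $p,q$ w.r.t. a dominating measure $\mu$; for the $\varphi$ above this equals $-\int\min\big((1-\bar c)\bar\pi\,p,\ \bar c(1-\bar\pi)\,q\big)\,d\mu$. A randomised classifier $f\colon\mathcal X\to[0,1]$ predicts $1$ on $x$ with probability $f(x)$. For a distribution $E$ of $(\mathsf X,\mathsf Z)$ on $\mathcal X\times\{0,1\}$ with $p=\Pr(\mathsf Z=1)$: $\mathrm{FNR}(f;E)=\mathbb E_{\mathsf X\mid\mathsf Z=1}[1-f(\mathsf X)]$, $\mathrm{FPR}(f;E)=\mathbb E_{\mathsf X\mid\mathsf Z=0}[f(\mathsf X)]$, $\mathrm{CS}(f;E,c)=p(1-c)\,\mathrm{FNR}(f;E)+(1-p)c\,\mathrm{FPR}(f;E)$,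 and $\mathrm{CS}^\diamond(f;E,c)=\min\big(\mathrm{CS}(f;E,c),\mathrm{CS}(1-f;E,c)\big)$. *)

theory Defs
  imports "HOL-Probability.Probability"
begin

text \<open>The joint distribution of (X, Ybar, Y) is a probability measure on
  'a \<times> bool \<times> bool; label True stands for 1.  MX is the measurable space on 'a.\<close>

definition condm :: "'b measure \<Rightarrow> 'b set \<Rightarrow> 'b measure" where
  "condm M A = density M (\<lambda>\<omega>. ennreal (indicator A \<omega> / measure M A))"

definition D_of :: "'a measure \<Rightarrow> ('a \<times> bool \<times> bool) measure \<Rightarrow> ('a \<times> bool) measure" where
  "D_of MX M = distr M (MX \<Otimes>\<^sub>M count_space UNIV) (\<lambda>\<omega>. (fst \<omega>, snd (snd \<omega>)))"

definition D_DP :: "'a measure \<Rightarrow> ('a \<times> bool \<times> bool) measure \<Rightarrow> ('a \<times> bool) measure" where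
  "D_DP MX M = distr M (MX \<Otimes>\<^sub>M count_space UNIV) (\<lambda>\<omega>. (fst \<omega>, fst (snd \<omega>)))"

definition D_EO :: "'a measure \<Rightarrow> ('a \<times> bool \<times> bool) measure \<Rightarrow> ('a \<times> bool) measure" where
  "D_EO MX M = distr (condm M {\<omega> \<in> space M. snd (snd \<omega>)})
      (MX \<Otimes>\<^sub>M count_space UNIV) (\<lambda>\<omega>. (fst \<omega>, fst (snd \<omega>)))"

definition marg :: "'a measure \<Rightarrow> ('a \<times> bool) measure \<Rightarrow> 'a measure" where
  "marg MX E = distr E MX fst"

definition prior :: "('a \<times> bool) measure \<Rightarrow> real" where
  "prior E = measure E {\<omega> \<in> space E. snd \<omega>}"

definition cexp :: "'b measure \<Rightarrow> 'b set \<Rightarrow> ('b \<Rightarrow> real) \<Rightarrow> real" where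
  "cexp E A g = (\<integral>\<omega>. indicator A \<omega> * g \<omega> \<partial>E) / measure E A"

definition FNR :: "('a \<Rightarrow> real) \<Rightarrow> ('a \<times> bool) measure \<Rightarrow> real" where
  "FNR f E = cexp E {\<omega> \<in> space E. snd \<omega>} (\<lambda>\<omega>. 1 - f (fst \<omega>))"

definition FPR :: "('a \<Rightarrow> real) \<Rightarrow> ('a \<times> bool) measure \<Rightarrow> real" where
  "FPR f E = cexp E {\<omega> \<in> space E. \<not> snd \<omega>} (\<lambda>\<omega>. f (fst \<omega>))"

definition CS :: "('a \<Rightarrow> real) \<Rightarrow> ('a \<times> bool) measure \<Rightarrow> real \<Rightarrow> real" where
  "CS f E c = prior E * (1 - c) * FNR f E + (1 - prior E) * c * FPR f E"

definition CSd :: "('a \<Rightarrow> real) \<Rightarrow> ('a \<times> bool) measure \<Rightarrow> real \<Rightarrow> real" where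
  "CSd f E c = min (CS f E c) (CS (\<lambda>x. 1 - f x) E c)"

definition classifiers :: "'a measure \<Rightarrow> ('a \<Rightarrow> real) set" where
  "classifiers MX = {f. f \<in> borel_measurable MX \<and> (\<forall>x \<in> space MX. 0 \<le> f x \<and> f x \<le> 1)}"

text \<open>V(tau), infimum in the extended reals (inf of empty set = +infinity)\<close>
definition Vval :: "'a measure \<Rightarrow> ('a \<times> bool) measure \<Rightarrow> ('a \<times> bool) measure
    \<Rightarrow> real \<Rightarrow> real \<Rightarrow> real \<Rightarrow> ereal" where
  "Vval MX D Db c cb \<tau> =
     Inf {ereal (CS f D c) | f. f \<in> classifiers MX \<and> CSd f Db cb \<ge> \<tau>}"

definition frontier :: "'a measure \<Rightarrow> ('a \<times> bool) measure \<Rightarrow> ('a \<times> bool) measure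
    \<Rightarrow> real \<Rightarrow> real \<Rightarrow> real \<Rightarrow> ereal" where
  "frontier MX D Db c cb \<tau> = Vval MX D Db c cb \<tau> - Vval MX D Db c cb 0"

text \<open>g is a version of x \<mapsto> Pr_E(Z = 1 | X = x)\<close>
definition is_cond_prob :: "'a measure \<Rightarrow> ('a \<times> bool) measure \<Rightarrow> ('a \<Rightarrow> real) \<Rightarrow> bool" where
  "is_cond_prob MX E g \<longleftrightarrow> g \<in> borel_measurable MX \<and> (\<forall>x \<in> space MX. 0 \<le> g x \<and> g x \<le> 1) \<and>
     (\<forall>A \<in> sets MX. (\<integral>x. indicator A x * g x \<partial>marg MX E) = measure E (A \<times> {True}))"

definition condlaw :: "'a measure \<Rightarrow> ('a \<times> bool) measure \<Rightarrow> bool \<Rightarrow> 'a measure" where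
  "condlaw MX E y = distr (condm E {\<omega> \<in> space E. snd \<omega> = y}) MX fst"

definition fdiv :: "'a measure \<Rightarrow> (real \<Rightarrow> real) \<Rightarrow> 'a measure \<Rightarrow> 'a measure \<Rightarrow> real" where
  "fdiv \<mu> \<phi> P Q = (\<integral>x. enn2real (RN_deriv \<mu> Q x) *
      \<phi> (enn2real (RN_deriv \<mu> P x) / enn2real (RN_deriv \<mu> Q x)) \<partial>\<mu>)"

definition phi :: "real \<Rightarrow> real \<Rightarrow> real \<Rightarrow> real" where
  "phi cb \<pi> t = - min ((1 - cb) * \<pi> * t) (cb * (1 - \<pi>))"

definition Bfun :: "real \<Rightarrow> real \<Rightarrow> real \<Rightarrow> real \<Rightarrow> real" where
  "Bfun c cb u v = \<bar>u - cb\<bar> * (if (u - cb) * (v - c) < 0 then 1 else 0)"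

text \<open>Delta_{c,cb}(etabar, eta); the dominating measure for I_phi is the X-marginal of Db\<close>
definition Delta :: "'a measure \<Rightarrow> ('a \<times> bool) measure \<Rightarrow> real \<Rightarrow> real
    \<Rightarrow> ('a \<Rightarrow> real) \<Rightarrow> ('a \<Rightarrow> real) \<Rightarrow> real" where
  "Delta MX Db c cb etab eta =
     (\<integral>x. Bfun c cb (etab x) (eta x) \<partial>marg MX Db)
     - fdiv (marg MX Db) (phi cb (prior Db)) (condlaw MX Db True) (condlaw MX Db False)"

end

theory Submission
  imports Defs
begin

text \<open>The Bayes classifier \<open>f\<^sub>0 = 1[c < \<eta>]\<close> minimises \<open>CS(-, D, c)\<close> over all classifiers,
  so \<open>V(\<tau>) = V(0) = CS(f\<^sub>0, D, c)\<close> as soon as \<open>f\<^sub>0\<close> itself satisfies the fairness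
  constraint on \<open>Db\<close>. Each \<open>\<Delta>\<close> is a lower bound for the cost of \<open>f\<^sub>0\<close> (resp. \<open>1 - f\<^sub>0\<close>)
  on \<open>Db\<close>: the negated \<open>f\<close>-divergence is at most the Bayes risk
  \<open>E[min((1 - cb) \<eta>b, cb (1 - \<eta>b))]\<close> of \<open>Db\<close>, and \<open>B(\<eta>b, \<eta>)\<close> bounds pointwise the excess
  cost of the decision \<open>1[c < \<eta>]\<close> over the Bayes decision \<open>1[cb < \<eta>b]\<close> for \<open>Db\<close>.\<close>

text \<open>Expected cost of predicting \<open>1\<close> with probability \<open>t\<close> where the label is \<open>1\<close>
  with probability \<open>u\<close>.\<close>

definition cs_risk :: "real \<Rightarrow> real \<Rightarrow> real \<Rightarrow> real" where
  "cs_risk c u t = (1 - c) * u * (1 - t) + c * (1 - u) * t"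

lemma cs_risk_bounded:
  assumes "0 \<le> c" "c \<le> 1" "0 \<le> u" "u \<le> 1" "0 \<le> t" "t \<le> 1"
  shows "\<bar>cs_risk c u t\<bar> \<le> 1"
proof -
  have "(1 - c) * (u * (1 - t)) \<le> (1 - c) * 1" "c * ((1 - u) * t) \<le> c * 1"
    using assms by (intro mult_left_mono mult_le_one; simp)+
  moreover have "0 \<le> (1 - c) * u * (1 - t)" "0 \<le> c * (1 - u) * t"
    using assms by auto
  ultimately show ?thesis by (simp add: cs_risk_def mult.assoc)
qed

lemma cs_risk_threshold_le:
  assumes "0 \<le> c" "c \<le> 1" "0 \<le> t" "t \<le> 1"
  shows "cs_risk c u (if c < u then 1 else 0) \<le> cs_risk c u t"
proof (cases "c < u")
  case True
  have "cs_risk c u t - cs_risk c u 1 = (1 - t) * (u - c)" by (simp add: cs_risk_def algebra_simps)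
  moreover have "0 \<le> (1 - t) * (u - c)" using True assms by simp
  ultimately show ?thesis using True by simp
next
  case False
  have "cs_risk c u t - cs_risk c u 0 = t * (c - u)" by (simp add: cs_risk_def algebra_simps)
  moreover have "0 \<le> t * (c - u)" using False assms by simp
  ultimately show ?thesis using False by simp
qed

lemma abs_Bfun_le_one:
  assumes "0 \<le> u" "u \<le> 1" "0 \<le> cb" "cb \<le> 1"
  shows "\<bar>Bfun c cb u v\<bar> \<le> 1"
  using assms by (simp add: Bfun_def abs_le_iff)

lemma Bfun_add_bayes_risk_le:
  assumes "0 \<le> u" "u \<le> 1" "0 \<le> cb" "cb \<le> 1"
  shows "Bfun c cb u v + min ((1 - cb) * u) (cb * (1 - u)) \<le> cs_risk cb u (if c < v then 1 else 0)"
  using assms unfolding Bfun_def cs_risk_def mult_less_0_iff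
  by (cases "c < v"; cases "u < cb"; cases "u = cb"; cases "v = c") (auto simp: min_def algebra_simps)

lemma Bfun_neg_add_bayes_risk_le:
  assumes "0 \<le> u" "u \<le> 1" "0 \<le> cb" "cb \<le> 1"
  shows "Bfun (- c) cb u (- v) + min ((1 - cb) * u) (cb * (1 - u))
    \<le> cs_risk cb u (1 - (if c < v then 1 else 0))"
  using assms unfolding Bfun_def cs_risk_def mult_less_0_iff
  by (cases "c < v"; cases "u < cb"; cases "u = cb"; cases "v = c") (auto simp: min_def algebra_simps)

lemma perspective_neg_min_bounds:
  fixes p q a b :: real
  assumes "0 \<le> p" "0 \<le> q" "0 \<le> a" "0 \<le> b"
  shows "- (a * p) \<le> q * - min (a * (p / q)) b" "- (b * q) \<le> q * - min (a * (p / q)) b"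
    "q * - min (a * (p / q)) b \<le> 0"
proof -
  have "q * - min (a * (p / q)) b = - min (a * p) (b * q)"
  proof (cases "q = 0")
    case True
    then show ?thesis using assms by (simp add: min_absorb2)
  qed (use assms in \<open>auto simp: min_def field_simps\<close>)
  then show "- (a * p) \<le> q * - min (a * (p / q)) b" "- (b * q) \<le> q * - min (a * (p / q)) b"
    "q * - min (a * (p / q)) b \<le> 0"
    using assms by auto
qed

lemma emeasure_condm:
  assumes "finite_measure M" "A \<in> sets M" "X \<in> sets M"
  shows "emeasure (condm M A) X = ennreal (measure M (X \<inter> A) / measure M A)"
proof -
  have "emeasure (condm M A) X = (\<integral>\<^sup>+ x. ennreal (indicator A x / measure M A) * indicator X x \<partial>M)"
    unfolding condm_def using assms by (subst emeasure_density) auto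
  also have "\<dots> = (\<integral>\<^sup>+ x. ennreal (1 / measure M A) * indicator (X \<inter> A) x \<partial>M)"
    by (intro nn_integral_cong) (auto simp: indicator_def)
  also have "\<dots> = ennreal (measure M (X \<inter> A) / measure M A)"
    using assms
    by (simp add: nn_integral_cmult_indicator finite_measure.emeasure_eq_measure ennreal_mult'[symmetric])
  finally show ?thesis .
qed

lemma prob_space_or_null_condm:
  assumes "finite_measure M" "A \<in> sets M"
  shows "prob_space (condm M A) \<or> emeasure (condm M A) (space (condm M A)) = 0"
proof -
  have "space (condm M A) = space M" by (simp add: condm_def)
  then have "emeasure (condm M A) (space (condm M A)) = ennreal (measure M A / measure M A)"
    using emeasure_condm[OF assms sets.top] sets.sets_into_space[OF assms(2)]
    by (simp add: Int_absorb1)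
  then show ?thesis
    by (cases "measure M A = 0") (auto intro!: prob_spaceI)
qed

lemma prob_space_or_null_distr:
  assumes "prob_space M \<or> emeasure M (space M) = 0" "g \<in> measurable M N"
  shows "prob_space (distr M N g) \<or> emeasure (distr M N g) (space (distr M N g)) = 0"
proof (cases "prob_space M")
  case False
  then have "emeasure M (space M) = 0" using assms(1) by auto
  then have "emeasure (distr M N g) (space N) = 0"
    using assms(2) by (subst emeasure_distr) (auto intro: emeasure_eq_0[of "space M"])
  then show ?thesis by simp
next
  case True
  then show ?thesis using assms(2) prob_space.prob_space_distr by blast
qed

lemma integral_null_space:
  assumes "emeasure M (space M) = 0"
  shows "integral\<^sup>L M (f :: _ \<Rightarrow> real) = 0"
  using assms by (intro integral_eq_zero_AE AE_I'[of "space M"]) (auto simp: null_sets_def)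

lemma measure_mult_cexp:
  assumes "finite_measure E" "A \<in> sets E"
  shows "measure E A * cexp E A g = (\<integral>\<omega>. indicator A \<omega> * g \<omega> \<partial>E)"
proof (cases "measure E A = 0")
  case True
  then have "A \<in> null_sets E"
    using assms by (simp add: finite_measure.emeasure_eq_measure null_sets_def)
  then have "AE \<omega> in E. indicator A \<omega> * g \<omega> = 0"
    by (rule AE_mp[OF AE_not_in]) auto
  then show ?thesis using True by (simp add: integral_eq_zero_AE cexp_def)
qed (simp add: cexp_def)

lemma integral_RN_deriv_indicator:
  assumes A: "A \<in> sets \<mu>" and fin: "emeasure N A < \<infinity>"
  shows "integrable \<mu> (\<lambda>x. enn2real (RN_deriv \<mu> N x) * indicator A x)"
    "(\<integral>x. enn2real (RN_deriv \<mu> N x) * indicator A x \<partial>\<mu>) \<le> enn2real (emeasure N A)"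
proof -
  have RN_le: "(\<integral>\<^sup>+ x. RN_deriv \<mu> N x * indicator A x \<partial>\<mu>) \<le> emeasure N A"
  proof (cases "\<exists>f. f \<in> borel_measurable \<mu> \<and> density \<mu> f = N")
    case True
    then have "density \<mu> (RN_deriv \<mu> N) = N" by (auto intro: RN_derivI)
    then show ?thesis using A emeasure_density[of "RN_deriv \<mu> N" \<mu> A] by simp
  next
    case False
    then have "RN_deriv \<mu> N = (\<lambda>_. 0)" by (auto simp: RN_deriv_def)
    then show ?thesis by simp
  qed
  have le: "(\<integral>\<^sup>+ x. ennreal (enn2real (RN_deriv \<mu> N x) * indicator A x) \<partial>\<mu>) \<le> emeasure N A"
    by (intro order.trans[OF nn_integral_mono RN_le]) (auto simp: indicator_def ennreal_enn2real_if)
  show "integrable \<mu> (\<lambda>x. enn2real (RN_deriv \<mu> N x) * indicator A x)"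
    using le fin A by (intro integrableI_nonneg) auto
  have "(\<integral>x. enn2real (RN_deriv \<mu> N x) * indicator A x \<partial>\<mu>)
      = enn2real (\<integral>\<^sup>+ x. ennreal (enn2real (RN_deriv \<mu> N x) * indicator A x) \<partial>\<mu>)"
    using A by (intro integral_eq_nn_integral) auto
  also have "\<dots> \<le> enn2real (emeasure N A)"
    using le fin by (intro enn2real_mono) auto
  finally show "(\<integral>x. enn2real (RN_deriv \<mu> N x) * indicator A x \<partial>\<mu>) \<le> enn2real (emeasure N A)" .
qed

text \<open>The integrand \<open>q \<phi>(p/q)\<close> with \<open>\<phi>(t) = -min(a t, b)\<close> is at least \<open>-a p\<close> on \<open>S\<close> and at
  least \<open>-b q\<close> off \<open>S\<close>; and \<open>\<integral>\<^sub>S p \<le> P(S)\<close> holds for \<open>RN_deriv\<close> without any absolute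
  continuity assumption.\<close>

lemma integral_RN_deriv_neg_min_lower_bound:
  fixes a b :: real
  assumes ab: "0 \<le> a" "0 \<le> b" and S[measurable]: "S \<in> sets \<mu>"
    and fin: "emeasure P S < \<infinity>" "emeasure Q (space \<mu> - S) < \<infinity>"
  defines "p \<equiv> \<lambda>x. enn2real (RN_deriv \<mu> P x)" and "q \<equiv> \<lambda>x. enn2real (RN_deriv \<mu> Q x)"
  shows "- (a * enn2real (emeasure P S) + b * enn2real (emeasure Q (space \<mu> - S)))
    \<le> (\<integral>x. q x * - min (a * (p x / q x)) b \<partial>\<mu>)"
proof -
  define S' where "S' = space \<mu> - S"
  have S'[measurable]: "S' \<in> sets \<mu>" unfolding S'_def by measurable
  have P: "integrable \<mu> (\<lambda>x. p x * indicator S x)" "(\<integral>x. p x * indicator S x \<partial>\<mu>) \<le> enn2real (emeasure P S)"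
    using integral_RN_deriv_indicator[OF S fin(1)] by (simp_all add: p_def)
  have Q: "integrable \<mu> (\<lambda>x. q x * indicator S' x)" "(\<integral>x. q x * indicator S' x \<partial>\<mu>) \<le> enn2real (emeasure Q S')"
    using integral_RN_deriv_indicator[OF S' fin(2)[folded S'_def]] by (simp_all add: q_def)
  define G where "G x = q x * - min (a * (p x / q x)) b" for x
  define h where "h x = - (a * (p x * indicator S x) + b * (q x * indicator S' x))" for x
  have h_le_G: "h x \<le> G x \<and> G x \<le> 0" if "x \<in> space \<mu>" for x
    using perspective_neg_min_bounds[of "p x" "q x" a b] ab that
    by (cases "x \<in> S") (auto simp: h_def G_def S'_def p_def q_def)
  have "integrable \<mu> h" unfolding h_def using P(1) Q(1) by simp
  moreover have "integrable \<mu> G"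
  proof (rule Bochner_Integration.integrable_bound[OF \<open>integrable \<mu> h\<close>])
    show "G \<in> borel_measurable \<mu>" unfolding G_def p_def q_def by measurable
    show "AE x in \<mu>. norm (G x) \<le> norm (h x)"
      using h_le_G by (intro AE_I2) fastforce
  qed
  ultimately have "(\<integral>x. h x \<partial>\<mu>) \<le> (\<integral>x. G x \<partial>\<mu>)"
    using h_le_G by (intro integral_mono) auto
  moreover have "(\<integral>x. h x \<partial>\<mu>) = - (a * (\<integral>x. p x * indicator S x \<partial>\<mu>) + b * (\<integral>x. q x * indicator S' x \<partial>\<mu>))"
    unfolding h_def using P(1) Q(1) by simp
  moreover have "a * (\<integral>x. p x * indicator S x \<partial>\<mu>) + b * (\<integral>x. q x * indicator S' x \<partial>\<mu>)
      \<le> a * enn2real (emeasure P S) + b * enn2real (emeasure Q S')"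
    using P(2) Q(2) ab by (intro add_mono mult_left_mono) auto
  ultimately show ?thesis by (simp add: G_def S'_def)
qed

lemma classifierD:
  "f \<in> classifiers MX \<Longrightarrow> f \<in> borel_measurable MX"
  "f \<in> classifiers MX \<Longrightarrow> x \<in> space MX \<Longrightarrow> 0 \<le> f x \<and> f x \<le> 1"
  by (simp_all add: classifiers_def)

lemma cond_prob_measurable:
  "is_cond_prob MX E g \<Longrightarrow> g \<in> borel_measurable MX"
  by (simp add: is_cond_prob_def)

lemma cond_prob_bounds:
  "is_cond_prob MX E g \<Longrightarrow> x \<in> space MX \<Longrightarrow> 0 \<le> g x \<and> g x \<le> 1"
  by (simp add: is_cond_prob_def)

locale labelled_prob_space = prob_space E
  for E :: "('a \<times> bool) measure" +
  fixes MX :: "'a measure"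
  assumes sets_eq: "sets E = sets (MX \<Otimes>\<^sub>M count_space UNIV)"
begin

lemma space_eq: "space E = space MX \<times> UNIV"
  using sets_eq_imp_space_eq[OF sets_eq] by (simp add: space_pair_measure)

lemma measurable_fst_label[measurable]: "fst \<in> measurable E MX"
  using measurable_cong_sets[OF sets_eq refl, of MX] measurable_fst by auto

lemma label_event_sets: "{\<omega> \<in> space E. snd \<omega> = y} \<in> sets E"
proof -
  have "{\<omega> \<in> space E. snd \<omega> = y} = space MX \<times> {y}" using space_eq by auto
  then show ?thesis using sets_eq by auto
qed

lemma times_label_sets: "A \<in> sets MX \<Longrightarrow> A \<times> {y} \<in> sets E"
  using sets_eq by auto

lemma sets_marg[simp]: "sets (marg MX E) = sets MX"
  and space_marg[simp]: "space (marg MX E) = space MX"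
  by (simp_all add: marg_def)

lemma measurable_marg[simp]: "measurable (marg MX E) N = measurable MX N"
  by (intro measurable_cong_sets) simp_all

lemma finite_measure_marg: "finite_measure (marg MX E)"
  unfolding marg_def by (rule finite_measure_distr[OF measurable_fst_label])

lemma integrable_marg_bounded:
  assumes "f \<in> borel_measurable MX" "\<And>x. x \<in> space MX \<Longrightarrow> \<bar>f x\<bar> \<le> B"
  shows "integrable (marg MX E) (f :: _ \<Rightarrow> real)"
  using assms by (intro finite_measure.integrable_const_bound[OF finite_measure_marg, of _ B] AE_I2) auto

lemma prior_complement: "1 - prior E = measure E {\<omega> \<in> space E. \<not> snd \<omega>}"
proof -
  have "{\<omega> \<in> space E. \<not> snd \<omega>} = space E - {\<omega> \<in> space E. snd \<omega>}" by auto
  then show ?thesis using prob_compl[OF label_event_sets[of True]] by (simp add: prior_def)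
qed

lemma integral_label_times_fst:
  assumes cp: "is_cond_prob MX E g" and h[measurable]: "h \<in> borel_measurable MX"
  shows "(\<integral>\<omega>. indicator {\<omega> \<in> space E. snd \<omega>} \<omega> * h (fst \<omega>) \<partial>E) = (\<integral>x. g x * h x \<partial>marg MX E)"
proof -
  define T where "T = {\<omega> \<in> space E. snd \<omega>}"
  have T[measurable]: "T \<in> sets E" using label_event_sets[of True] by (simp add: T_def)
  have [measurable]: "g \<in> borel_measurable MX" using cp by (rule cond_prob_measurable)
  have eq: "distr (density E (\<lambda>\<omega>. ennreal (indicator T \<omega>))) MX fst = density (marg MX E) (\<lambda>x. ennreal (g x))"
  proof (rule measure_eqI)
    fix A assume "A \<in> sets (distr (density E (\<lambda>\<omega>. ennreal (indicator T \<omega>))) MX fst)"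
    then have A[measurable]: "A \<in> sets MX" by simp
    have "T \<inter> (fst -` A \<inter> space E) = A \<times> {True}"
      using space_eq sets.sets_into_space[OF A] by (auto simp: T_def)
    then have "emeasure (distr (density E (\<lambda>\<omega>. ennreal (indicator T \<omega>))) MX fst) A = emeasure E (A \<times> {True})"
      by (simp add: emeasure_distr ennreal_indicator emeasure_restricted)
    also have "\<dots> = ennreal (\<integral>x. g x * indicator A x \<partial>marg MX E)"
      using cp A times_label_sets[OF A] by (simp add: is_cond_prob_def emeasure_eq_measure mult.commute)
    also have "\<dots> = emeasure (density (marg MX E) (\<lambda>x. ennreal (g x))) A"
    proof -
      have int: "integrable (marg MX E) (\<lambda>x. g x * indicator A x)"
        using cond_prob_bounds[OF cp] by (intro integrable_marg_bounded[of _ 1]) (auto simp: indicator_def)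
      have "emeasure (density (marg MX E) (\<lambda>x. ennreal (g x))) A
          = (\<integral>\<^sup>+ x. ennreal (g x * indicator A x) \<partial>marg MX E)"
        by (subst emeasure_density) (auto intro!: nn_integral_cong simp: indicator_def)
      also have "\<dots> = ennreal (\<integral>x. g x * indicator A x \<partial>marg MX E)"
        using int cond_prob_bounds[OF cp] by (intro nn_integral_eq_integral AE_I2) auto
      finally show ?thesis by simp
    qed
    finally show "emeasure (distr (density E (\<lambda>\<omega>. ennreal (indicator T \<omega>))) MX fst) A
      = emeasure (density (marg MX E) (\<lambda>x. ennreal (g x))) A" .
  qed simp
  have "(\<integral>x. g x * h x \<partial>marg MX E) = (\<integral>x. h x \<partial>density (marg MX E) (\<lambda>x. ennreal (g x)))"
    using cond_prob_bounds[OF cp] by (subst integral_density) auto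
  also have "\<dots> = (\<integral>\<omega>. h (fst \<omega>) \<partial>density E (\<lambda>\<omega>. ennreal (indicator T \<omega>)))"
    by (simp add: eq[symmetric] integral_distr)
  also have "\<dots> = (\<integral>\<omega>. indicator T \<omega> * h (fst \<omega>) \<partial>E)"
    by (subst integral_density) auto
  finally show ?thesis by (simp add: T_def)
qed

lemma CS_eq_integral_cs_risk:
  assumes cp: "is_cond_prob MX E g" and f: "f \<in> classifiers MX"
  shows "CS f E c = (\<integral>x. cs_risk c (g x) (f x) \<partial>marg MX E)"
proof -
  define T where "T = {\<omega> \<in> space E. snd \<omega>}"
  define F where "F = {\<omega> \<in> space E. \<not> snd \<omega>}"
  have T: "T \<in> sets E" and F: "F \<in> sets E"
    using label_event_sets[of True] label_event_sets[of False] by (simp_all add: T_def F_def)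
  have [measurable]: "f \<in> borel_measurable MX" "g \<in> borel_measurable MX"
    using classifierD(1)[OF f] cond_prob_measurable[OF cp] .
  note f01 = classifierD(2)[OF f] and g01 = cond_prob_bounds[OF cp]
  have fst_space: "\<omega> \<in> space E \<Longrightarrow> fst \<omega> \<in> space MX" for \<omega> using space_eq by auto
  have "integrable E (\<lambda>\<omega>. f (fst \<omega>))" "integrable E (\<lambda>\<omega>. indicator T \<omega> * f (fst \<omega>))"
    using f01 fst_space T by (auto intro!: integrable_const_bound[of _ 1] simp: indicator_def)
  moreover have "(\<integral>\<omega>. indicator F \<omega> * f (fst \<omega>) \<partial>E)
      = (\<integral>\<omega>. f (fst \<omega>) - indicator T \<omega> * f (fst \<omega>) \<partial>E)"
    by (rule Bochner_Integration.integral_cong) (auto simp: F_def T_def indicator_def)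
  ultimately have split_F: "(\<integral>\<omega>. indicator F \<omega> * f (fst \<omega>) \<partial>E)
      = (\<integral>\<omega>. f (fst \<omega>) \<partial>E) - (\<integral>\<omega>. indicator T \<omega> * f (fst \<omega>) \<partial>E)"
    by simp
  have FN: "prior E * FNR f E = (\<integral>x. g x * (1 - f x) \<partial>marg MX E)"
    using measure_mult_cexp[OF finite_measure_axioms T] integral_label_times_fst[OF cp, of "\<lambda>x. 1 - f x"]
    by (simp add: prior_def FNR_def T_def)
  have FP: "(1 - prior E) * FPR f E = (\<integral>x. f x \<partial>marg MX E) - (\<integral>x. g x * f x \<partial>marg MX E)"
    using measure_mult_cexp[OF finite_measure_axioms F] split_F integral_label_times_fst[OF cp, of f]
    by (simp add: prior_complement FPR_def F_def T_def marg_def integral_distr)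
  have integrable: "integrable (marg MX E) (\<lambda>x. g x * (1 - f x))"
    "integrable (marg MX E) (\<lambda>x. g x * f x)" "integrable (marg MX E) f"
    using f01 g01 by (auto intro!: integrable_marg_bounded[of _ 1] mult_le_one simp: abs_mult)
  have "CS f E c = (1 - c) * (prior E * FNR f E) + c * ((1 - prior E) * FPR f E)"
    by (simp add: CS_def algebra_simps)
  also have "\<dots> = (1 - c) * (\<integral>x. g x * (1 - f x) \<partial>marg MX E)
      + c * ((\<integral>x. f x \<partial>marg MX E) - (\<integral>x. g x * f x \<partial>marg MX E))"
    by (simp only: FN FP)
  also have "\<dots> = (\<integral>x. (1 - c) * (g x * (1 - f x)) + c * (f x - g x * f x) \<partial>marg MX E)"
    using integrable by simp
  also have "\<dots> = (\<integral>x. cs_risk c (g x) (f x) \<partial>marg MX E)"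
    by (rule Bochner_Integration.integral_cong) (simp_all add: cs_risk_def algebra_simps)
  finally show ?thesis .
qed

lemma CS_threshold_le:
  assumes cp: "is_cond_prob MX E g" and c: "0 \<le> c" "c \<le> 1" and f: "f \<in> classifiers MX"
  shows "CS (\<lambda>x. if c < g x then 1 else 0) E c \<le> CS f E c"
proof -
  have thr: "(\<lambda>x. if c < g x then 1 else 0 :: real) \<in> classifiers MX"
    using cond_prob_measurable[OF cp] by (simp add: classifiers_def)
  have bounded: "integrable (marg MX E) (\<lambda>x. cs_risk c (g x) (h x))" if "h \<in> classifiers MX" for h
    using cs_risk_bounded[OF c] cond_prob_bounds[OF cp] classifierD[OF that] cond_prob_measurable[OF cp]
    by (intro integrable_marg_bounded[of _ 1]) (auto simp: cs_risk_def)
  show ?thesis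
    unfolding CS_eq_integral_cs_risk[OF cp thr] CS_eq_integral_cs_risk[OF cp f]
    using bounded[OF thr] bounded[OF f] cs_risk_threshold_le[OF c] classifierD(2)[OF f]
    by (intro integral_mono) auto
qed

lemma emeasure_condlaw:
  assumes S[measurable]: "S \<in> sets MX"
  shows "emeasure (condlaw MX E y) S = ennreal (measure E (S \<times> {y}) / measure E {\<omega> \<in> space E. snd \<omega> = y})"
proof -
  define T where "T = {\<omega> \<in> space E. snd \<omega> = y}"
  have T: "T \<in> sets E" unfolding T_def by (rule label_event_sets)
  have "fst -` S \<inter> space E \<inter> T = S \<times> {y}"
    using space_eq sets.sets_into_space[OF S] by (auto simp: T_def)
  moreover have "fst -` S \<inter> space E \<in> sets E" by measurable
  moreover have "fst \<in> measurable (condm E T) MX" by (simp add: condm_def)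
  ultimately show ?thesis
    using emeasure_condm[OF finite_measure_axioms T]
    by (simp add: condlaw_def T_def[symmetric] emeasure_distr condm_def[of E T, THEN arg_cong[where f=space]])
qed

lemma measure_label_mult_condlaw:
  assumes S: "S \<in> sets MX"
  shows "measure E {\<omega> \<in> space E. snd \<omega> = y} * enn2real (emeasure (condlaw MX E y) S) = measure E (S \<times> {y})"
proof (cases "measure E {\<omega> \<in> space E. snd \<omega> = y} = 0")
  case True
  have "S \<times> {y} \<subseteq> {\<omega> \<in> space E. snd \<omega> = y}"
    using space_eq sets.sets_into_space[OF S] by auto
  then have "measure E (S \<times> {y}) \<le> 0"
    using True finite_measure_mono[OF _ label_event_sets[of y]] by simp
  then have "measure E (S \<times> {y}) = 0"
    using measure_nonneg[of E] by (intro antisym) auto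
  then show ?thesis using True by simp
qed (simp add: emeasure_condlaw[OF S])

lemma integral_indicator_cond_prob_compl:
  assumes cp: "is_cond_prob MX E g" and A[measurable]: "A \<in> sets MX"
  shows "(\<integral>x. indicator A x * (1 - g x) \<partial>marg MX E) = measure E (A \<times> {False})"
proof -
  have [measurable]: "g \<in> borel_measurable MX" using cp by (rule cond_prob_measurable)
  have "integrable (marg MX E) (indicator A :: _ \<Rightarrow> real)" "integrable (marg MX E) (\<lambda>x. indicator A x * g x)"
    using cond_prob_bounds[OF cp] by (auto intro!: integrable_marg_bounded[of _ 1] simp: indicator_def)
  then have "(\<integral>x. indicator A x * (1 - g x) \<partial>marg MX E)
      = measure (marg MX E) A - (\<integral>x. indicator A x * g x \<partial>marg MX E)"
    by (simp add: algebra_simps)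
  also have "measure (marg MX E) A = measure E (A \<times> {True} \<union> A \<times> {False})"
  proof -
    have "fst -` A \<inter> space E = A \<times> {True} \<union> A \<times> {False}"
      using space_eq sets.sets_into_space[OF A] by auto
    then show ?thesis unfolding marg_def by (subst measure_distr) auto
  qed
  also have "\<dots> = measure E (A \<times> {True}) + measure E (A \<times> {False})"
    using times_label_sets[OF A] by (intro measure_Union) auto
  finally show ?thesis
    using cp A by (simp add: is_cond_prob_def)
qed

lemma fdiv_lower_bound:
  assumes cb: "0 \<le> cb" "cb \<le> 1" and S[measurable]: "S \<in> sets MX"
  shows "- ((1 - cb) * measure E (S \<times> {True}) + cb * measure E ((space MX - S) \<times> {False}))
    \<le> fdiv (marg MX E) (phi cb (prior E)) (condlaw MX E True) (condlaw MX E False)"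
proof -
  define P where "P = condlaw MX E True"
  define Q where "Q = condlaw MX E False"
  have S'[measurable]: "space MX - S \<in> sets MX" by measurable
  have "0 \<le> (1 - cb) * prior E" "0 \<le> cb * (1 - prior E)"
    using cb prior_complement by (auto simp: prior_def)
  then have "- ((1 - cb) * prior E * enn2real (emeasure P S) + cb * (1 - prior E) * enn2real (emeasure Q (space MX - S)))
      \<le> fdiv (marg MX E) (phi cb (prior E)) P Q"
    using integral_RN_deriv_neg_min_lower_bound[of _ _ S "marg MX E" P Q] emeasure_condlaw[OF S] emeasure_condlaw[OF S']
    by (simp add: fdiv_def phi_def P_def Q_def)
  moreover have "prior E * enn2real (emeasure P S) = measure E (S \<times> {True})"
    using measure_label_mult_condlaw[OF S, of True] by (simp add: prior_def P_def)
  moreover have "(1 - prior E) * enn2real (emeasure Q (space MX - S)) = measure E ((space MX - S) \<times> {False})"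
    using measure_label_mult_condlaw[OF S', of False] by (simp add: prior_complement Q_def)
  ultimately show ?thesis by (simp add: P_def Q_def mult.assoc)
qed

lemma integral_bayes_risk:
  fixes cb :: real
  assumes cp: "is_cond_prob MX E g"
  defines "S \<equiv> {x \<in> space MX. g x \<le> cb}"
  shows "(\<integral>x. min ((1 - cb) * g x) (cb * (1 - g x)) \<partial>marg MX E)
    = (1 - cb) * measure E (S \<times> {True}) + cb * measure E ((space MX - S) \<times> {False})"
proof -
  have [measurable]: "g \<in> borel_measurable MX" using cp by (rule cond_prob_measurable)
  have S[measurable]: "S \<in> sets MX" "space MX - S \<in> sets MX" unfolding S_def by measurable
  have "integrable (marg MX E) (\<lambda>x. indicator S x * g x)"
    "integrable (marg MX E) (\<lambda>x. indicator (space MX - S) x * (1 - g x))"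
    using cond_prob_bounds[OF cp] by (auto intro!: integrable_marg_bounded[of _ 1] simp: indicator_def)
  moreover have "(\<integral>x. min ((1 - cb) * g x) (cb * (1 - g x)) \<partial>marg MX E)
      = (\<integral>x. (1 - cb) * (indicator S x * g x) + cb * (indicator (space MX - S) x * (1 - g x)) \<partial>marg MX E)"
    by (intro Bochner_Integration.integral_cong) (auto simp: S_def indicator_def min_def algebra_simps)
  ultimately show ?thesis
    using cp S integral_indicator_cond_prob_compl[OF cp S(2)] by (simp add: is_cond_prob_def)
qed

lemma neg_fdiv_le_bayes_risk:
  assumes cp: "is_cond_prob MX E g" and cb: "0 \<le> cb" "cb \<le> 1"
  shows "- fdiv (marg MX E) (phi cb (prior E)) (condlaw MX E True) (condlaw MX E False)
    \<le> (\<integral>x. min ((1 - cb) * g x) (cb * (1 - g x)) \<partial>marg MX E)"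
proof -
  have [measurable]: "g \<in> borel_measurable MX" using cp by (rule cond_prob_measurable)
  have "{x \<in> space MX. g x \<le> cb} \<in> sets MX" by measurable
  then show ?thesis
    using fdiv_lower_bound[OF cb] integral_bayes_risk[OF cp, of cb] by fastforce
qed

lemma Delta_le_CS:
  assumes cp: "is_cond_prob MX E g" and cb: "0 \<le> cb" "cb \<le> 1" and f: "f \<in> classifiers MX"
    and e[measurable]: "e \<in> borel_measurable MX"
    and excess: "\<And>x. x \<in> space MX \<Longrightarrow>
      Bfun c cb (g x) (e x) + min ((1 - cb) * g x) (cb * (1 - g x)) \<le> cs_risk cb (g x) (f x)"
  shows "Delta MX E c cb g e \<le> CS f E cb"
proof -
  have [measurable]: "g \<in> borel_measurable MX" "f \<in> borel_measurable MX"
    using cond_prob_measurable[OF cp] classifierD(1)[OF f] .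
  note g01 = cond_prob_bounds[OF cp] and f01 = classifierD(2)[OF f]
  have B: "integrable (marg MX E) (\<lambda>x. Bfun c cb (g x) (e x))"
  proof (rule integrable_marg_bounded[of _ 1])
    show "(\<lambda>x. Bfun c cb (g x) (e x)) \<in> borel_measurable MX" unfolding Bfun_def by measurable
  qed (use g01 cb abs_Bfun_le_one in auto)
  have R: "integrable (marg MX E) (\<lambda>x. min ((1 - cb) * g x) (cb * (1 - g x)))"
    using g01 cb by (intro integrable_marg_bounded[of _ 1]) (auto simp: min_def intro!: mult_le_one)
  have C: "integrable (marg MX E) (\<lambda>x. cs_risk cb (g x) (f x))"
    using cs_risk_bounded[OF cb] g01 f01 by (intro integrable_marg_bounded[of _ 1]) (auto simp: cs_risk_def)
  have "Delta MX E c cb g e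
      \<le> (\<integral>x. Bfun c cb (g x) (e x) \<partial>marg MX E) + (\<integral>x. min ((1 - cb) * g x) (cb * (1 - g x)) \<partial>marg MX E)"
    using neg_fdiv_le_bayes_risk[OF cp cb] by (simp add: Delta_def)
  also have "\<dots> = (\<integral>x. Bfun c cb (g x) (e x) + min ((1 - cb) * g x) (cb * (1 - g x)) \<partial>marg MX E)"
    using B R by simp
  also have "\<dots> \<le> (\<integral>x. cs_risk cb (g x) (f x) \<partial>marg MX E)"
    using B R C excess by (intro integral_mono) auto
  also have "\<dots> = CS f E cb"
    using CS_eq_integral_cs_risk[OF cp f] by simp
  finally show ?thesis .
qed

lemma min_Delta_le_CSd_threshold:
  assumes cp: "is_cond_prob MX E g" and cb: "0 \<le> cb" "cb \<le> 1" and e[measurable]: "e \<in> borel_measurable MX"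
  shows "min (Delta MX E c cb g e) (Delta MX E (- c) cb g (\<lambda>x. - e x))
    \<le> CSd (\<lambda>x. if c < e x then 1 else 0) E cb"
proof -
  have "(\<lambda>x. if c < e x then 1 else 0 :: real) \<in> classifiers MX"
    "(\<lambda>x. 1 - (if c < e x then 1 else 0) :: real) \<in> classifiers MX"
    by (simp_all add: classifiers_def)
  then have "Delta MX E c cb g e \<le> CS (\<lambda>x. if c < e x then 1 else 0) E cb"
    "Delta MX E (- c) cb g (\<lambda>x. - e x) \<le> CS (\<lambda>x. 1 - (if c < e x then 1 else 0)) E cb"
    using Bfun_add_bayes_risk_le Bfun_neg_add_bayes_risk_le cond_prob_bounds[OF cp] cb
    by (auto intro!: Delta_le_CS[OF cp cb])
  then show ?thesis by (auto simp: CSd_def min_le_iff_disj)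
qed

end

lemma CS_null:
  assumes "emeasure E (space E) = 0"
  shows "CS f E c = 0"
proof -
  have "measure E A = 0" for A
    using emeasure_space[of E A] assms by (simp add: measure_def)
  then show ?thesis by (simp add: CS_def FNR_def FPR_def cexp_def prior_def)
qed

lemma Delta_null:
  assumes "sets E = sets (MX \<Otimes>\<^sub>M count_space UNIV)" "emeasure E (space E) = 0"
  shows "Delta MX E c cb g e = 0"
proof -
  have "fst \<in> measurable E MX"
    using measurable_cong_sets[OF assms(1) refl, of MX] measurable_fst by auto
  then have "emeasure (marg MX E) (space (marg MX E)) = 0"
    using emeasure_space[of E "fst -` space MX \<inter> space E"] assms(2)
    by (simp add: marg_def emeasure_distr)
  then show ?thesis by (simp add: Delta_def fdiv_def integral_null_space)
qed

context
  fixes MX :: "'a measure" and M :: "('a \<times> bool \<times> bool) measure"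
  assumes prob_M: "prob_space M"
    and sets_M: "sets M = sets (MX \<Otimes>\<^sub>M (count_space UNIV \<Otimes>\<^sub>M count_space UNIV))"
begin

lemma measurable_M_eq: "measurable M = measurable (MX \<Otimes>\<^sub>M (count_space UNIV \<Otimes>\<^sub>M count_space UNIV))"
  by (intro ext measurable_cong_sets[OF sets_M refl])

lemma labelled_prob_space_D_of: "labelled_prob_space (D_of MX M) MX"
proof -
  have "(\<lambda>\<omega>. (fst \<omega>, snd (snd \<omega>))) \<in> measurable M (MX \<Otimes>\<^sub>M count_space UNIV)"
    unfolding measurable_M_eq by measurable
  then have "prob_space (D_of MX M)"
    unfolding D_of_def by (rule prob_space.prob_space_distr[OF prob_M])
  then show ?thesis
    by (simp add: labelled_prob_space_def labelled_prob_space_axioms_def D_of_def)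
qed

lemma fair_distribution_cases:
  assumes "Db = D_DP MX M \<or> Db = D_EO MX M"
  obtains "labelled_prob_space Db MX"
  | "sets Db = sets (MX \<Otimes>\<^sub>M count_space UNIV)" "emeasure Db (space Db) = 0"
proof -
  have sets_Db: "sets Db = sets (MX \<Otimes>\<^sub>M count_space UNIV)"
    using assms by (auto simp: D_DP_def D_EO_def)
  have pair[measurable]: "(\<lambda>\<omega>. (fst \<omega>, fst (snd \<omega>))) \<in> measurable M (MX \<Otimes>\<^sub>M count_space UNIV)"
    unfolding measurable_M_eq by measurable
  have "prob_space Db \<or> emeasure Db (space Db) = 0"
    using assms
  proof
    assume "Db = D_DP MX M"
    then show ?thesis using prob_space.prob_space_distr[OF prob_M pair] by (simp add: D_DP_def)
  next
    assume Db: "Db = D_EO MX M"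
    define T where "T = {\<omega> \<in> space M. snd (snd \<omega>)}"
    \<comment> \<open>if \<open>T\<close> is null, \<open>condm M T\<close> is the zero measure (division by zero)\<close>
    have "(\<lambda>\<omega>. snd (snd \<omega>)) \<in> measurable M (count_space UNIV)"
      unfolding measurable_M_eq by measurable
    then have "T \<in> sets M" unfolding T_def by measurable
    then have "prob_space (condm M T) \<or> emeasure (condm M T) (space (condm M T)) = 0"
      by (rule prob_space_or_null_condm[OF prob_space.finite_measure[OF prob_M]])
    moreover have "(\<lambda>\<omega>. (fst \<omega>, fst (snd \<omega>))) \<in> measurable (condm M T) (MX \<Otimes>\<^sub>M count_space UNIV)"
      by (simp add: condm_def)
    ultimately show ?thesis
      unfolding Db D_EO_def T_def[symmetric] by (rule prob_space_or_null_distr)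
  qed
  then show ?thesis
  proof
    assume "prob_space Db"
    then show ?thesis
      using that(1) sets_Db by (simp add: labelled_prob_space_def labelled_prob_space_axioms_def)
  qed (use that(2) sets_Db in simp)
qed

end

lemma Vval_eq_minimum:
  assumes "f0 \<in> classifiers MX" "\<tau> \<le> CSd f0 Db cb"
    and "\<And>f. f \<in> classifiers MX \<Longrightarrow> CS f0 D c \<le> CS f D c"
  shows "Vval MX D Db c cb \<tau> = ereal (CS f0 D c)"
  unfolding Vval_def
proof (rule antisym)
  show "Inf {ereal (CS f D c) |f. f \<in> classifiers MX \<and> \<tau> \<le> CSd f Db cb} \<le> ereal (CS f0 D c)"
    using assms(1,2) by (intro Inf_lower) auto
  show "ereal (CS f0 D c) \<le> Inf {ereal (CS f D c) |f. f \<in> classifiers MX \<and> \<tau> \<le> CSd f Db cb}"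
    using assms(3) by (intro Inf_greatest) auto
qed

theorem proposition3:
  fixes MX :: "'a measure" and M :: "('a \<times> bool \<times> bool) measure"
    and Db :: "('a \<times> bool) measure"
    and c cb :: real and eta etab :: "'a \<Rightarrow> real"
  assumes "prob_space M"
    and "sets M = sets (MX \<Otimes>\<^sub>M (count_space UNIV \<Otimes>\<^sub>M count_space UNIV))"
    and "0 \<le> c" "c \<le> 1" "0 \<le> cb" "cb \<le> 1"
    and "Db = D_DP MX M \<or> Db = D_EO MX M"
    and "is_cond_prob MX (D_of MX M) eta"
    and "is_cond_prob MX Db etab"
  shows "\<forall>\<tau>. 0 \<le> \<tau> \<and> \<tau> \<le> min (Delta MX Db c cb etab eta) (Delta MX Db (- c) cb etab (\<lambda>x. - eta x))
           \<longrightarrow> frontier MX (D_of MX M) Db c cb \<tau> = 0"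
proof -
  interpret D: labelled_prob_space "D_of MX M" MX
    by (rule labelled_prob_space_D_of[OF assms(1,2)])
  define f0 where "f0 = (\<lambda>x. if c < eta x then 1 else 0 :: real)"
  have eta[measurable]: "eta \<in> borel_measurable MX"
    using cond_prob_measurable[OF assms(8)] .
  have f0: "f0 \<in> classifiers MX"
    by (simp add: f0_def classifiers_def)
  have optimal: "CS f0 (D_of MX M) c \<le> CS f (D_of MX M) c" if "f \<in> classifiers MX" for f
    unfolding f0_def by (rule D.CS_threshold_le[OF assms(8,3,4) that])
  have fair: "min (Delta MX Db c cb etab eta) (Delta MX Db (- c) cb etab (\<lambda>x. - eta x)) \<le> CSd f0 Db cb"
  proof (rule fair_distribution_cases[OF assms(1,2,7)])
    assume "labelled_prob_space Db MX"
    then show ?thesis unfolding f0_def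
      by (rule labelled_prob_space.min_Delta_le_CSd_threshold[OF _ assms(9,5,6) eta])
  next
    assume "sets Db = sets (MX \<Otimes>\<^sub>M count_space UNIV)" "emeasure Db (space Db) = 0"
    then show ?thesis by (simp add: Delta_null CSd_def CS_null)
  qed
  show ?thesis
    using Vval_eq_minimum[OF f0 _ optimal] fair by (auto simp: frontier_def)
qed

end
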